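(* Let $\mathcal{D}(\cdot)$ be a location-scale family on a convex set $\Theta\subseteq\mathbb{R}^d$, $z_\theta\sim\mathcal{D}(\theta)\iff z_\theta\overset{d}{=}(\Sigma_0+\Sigma(\theta))z_0+\mu_0+\mu\theta$, let $g:\mathbb{R}^m\to\mathbb{R}$, and let $\gamma_z\geq 0$. Suppose that for all $\theta,\theta'\in\Theta$ and $\alpha\in(0,1)$, $$\mathbb{E}_{z\sim\mathcal{D}(\alpha\theta+(1-\alpha)\theta')}[g(z)]\leq\mathbb{E}_{z\sim\alpha\mathcal{D}(\theta)+(1-\alpha)\mathcal{D}(\theta')}[g(z)]-\frac{\alpha(1-\alpha)\gamma_z}{2}\mathbb{E}\|\Sigma(\theta-\theta')z_0+\mu(\theta-\theta')\|_2^2.$$ Then for all $\theta,\theta'\in\Theta$ such that $\theta\mapsto\mathbb{E}_{z\sim\mathcal{D}(\theta)}[g(z)]$ is differentiable at $\theta$, $$\mathbb{E}_{z\sim\mathcal{D}(\theta')}[g(z)]\geq\mathbb{E}_{z\sim\mathcal{D}(\theta)}[g(z)]+\big(\nabla_\theta\mathbb{E}_{z\sim\mathcal{D}(\theta)}[g(z)]\big)^\top(\theta'-\theta)+\frac{\gamma_z}{2}\mathbb{E}\|\Sigma(\theta-\theta')z_0+\mu(\theta-\theta')\|_2^2.$$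
   Context: Location-scale family: $z_0\sim\mathcal{D}_0$ is drawn from a fixed zero-mean distribution $\mathcal{D}_0$ on $\mathbb{R}^m$ with finite second moments, $\Sigma_0\in\mathbb{R}^{m\times m}$, $\mu_0\in\mathbb{R}^m$ fixed, $\mu:\mathbb{R}^d\to\mathbb{R}^m$ and $\Sigma:\mathbb{R}^d\to\mathbb{R}^{m\times m}$ linear maps; expectations $\mathbb{E}\|\cdot\|$ are over $z_0\sim\mathcal{D}_0$, and all expectations of $g$ are assumed finite. $\alpha\mathcal{D}(\theta)+(1-\alpha)\mathcal{D}(\theta')$ denotes the mixture distribution. *)

theory Defs
  imports "HOL-Probability.Probability"
begin

definition ls_map ::
  "real^'m^'m \<Rightarrow> (real^'d::finite \<Rightarrow> real^'m^'m) \<Rightarrow> real^'m \<Rightarrow> (real^'d \<Rightarrow> real^'m) \<Rightarrow> real^'d \<Rightarrow> real^'m \<Rightarrow> real^'m::finite"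
  where "ls_map S0 SS mu0 mu \<theta> z0 = (S0 + SS \<theta>) *v z0 + mu0 + mu \<theta>"

definition ls_dist ::
  "(real^'m) measure \<Rightarrow> real^'m^'m \<Rightarrow> (real^'d::finite \<Rightarrow> real^'m^'m) \<Rightarrow> real^'m \<Rightarrow> (real^'d \<Rightarrow> real^'m) \<Rightarrow> real^'d \<Rightarrow> (real^'m::finite) measure"
  where "ls_dist D0 S0 SS mu0 mu \<theta> = distr D0 borel (ls_map S0 SS mu0 mu \<theta>)"

definition mix_measure :: "real \<Rightarrow> 'a measure \<Rightarrow> 'a measure \<Rightarrow> 'a measure"
  where "mix_measure \<alpha> M N = measure_of (space M) (sets M)
           (\<lambda>A. ennreal \<alpha> * emeasure M A + ennreal (1 - \<alpha>) * emeasure N A)"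

end

theory Submission
  imports Defs
begin

text \<open>
  Write \<open>F \<theta>\<close> for the expectation of \<open>g\<close> under \<open>\<D>(\<theta>)\<close>. Expectation is affine in the
  mixture weight, so the hypothesis, applied to the pair \<open>\<theta>', \<theta>\<close>, says that on the segment
  from \<open>\<theta>\<close> to \<open>\<theta>'\<close> the function \<open>F\<close> lies below its chord by at least \<open>t (1 - t) \<gamma>/2 Q\<close>,
  where \<open>Q\<close> is the expected squared norm on the right-hand side. Dividing by \<open>t\<close> and letting
  \<open>t \<down> 0\<close> gives the first-order bound.
\<close>

lemma sets_mix_measure [simp]: "sets (mix_measure \<alpha> M N) = sets M"
  by (simp add: mix_measure_def sets.space_closed)

lemma space_mix_measure [simp]: "space (mix_measure \<alpha> M N) = space M"
  by (simp add: mix_measure_def sets.space_closed)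

lemma measurable_mix_measure [simp]: "measurable (mix_measure \<alpha> M N) K = measurable M K"
  by (rule measurable_cong_sets) simp_all

lemma emeasure_mix_measure:
  assumes sets_N: "sets N = sets M" and A: "A \<in> sets M"
  shows "emeasure (mix_measure \<alpha> M N) A = ennreal \<alpha> * emeasure M A + ennreal (1 - \<alpha>) * emeasure N A"
  unfolding mix_measure_def
proof (rule emeasure_measure_of_sigma[OF sets.sigma_algebra_axioms _ _ A])
  show "positive (sets M) (\<lambda>A. ennreal \<alpha> * emeasure M A + ennreal (1 - \<alpha>) * emeasure N A)"
    by (simp add: positive_def)
  show "countably_additive (sets M) (\<lambda>A. ennreal \<alpha> * emeasure M A + ennreal (1 - \<alpha>) * emeasure N A)"
  proof (rule countably_additiveI)
    fix B :: "nat \<Rightarrow> _"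
    assume "range B \<subseteq> sets M" "disjoint_family B" "\<Union> (range B) \<in> sets M"
    then show "(\<Sum>i. ennreal \<alpha> * emeasure M (B i) + ennreal (1 - \<alpha>) * emeasure N (B i)) =
        ennreal \<alpha> * emeasure M (\<Union> (range B)) + ennreal (1 - \<alpha>) * emeasure N (\<Union> (range B))"
      using sets_N by (simp add: suminf_add[symmetric] suminf_emeasure)
  qed
qed

lemma nn_integral_mix_measure:
  assumes sets_N: "sets N = sets M" and f: "f \<in> borel_measurable M"
  shows "(\<integral>\<^sup>+x. f x \<partial>mix_measure \<alpha> M N)
    = ennreal \<alpha> * (\<integral>\<^sup>+x. f x \<partial>M) + ennreal (1 - \<alpha>) * (\<integral>\<^sup>+x. f x \<partial>N)"
proof -
  have measurable_N: "h \<in> borel_measurable N" if "h \<in> borel_measurable M" for h :: "_ \<Rightarrow> ennreal"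
    using that by (subst measurable_cong_sets[OF sets_N refl])
  from f show ?thesis
  proof (induct rule: borel_measurable_induct)
    case (cong f g)
    have "(\<integral>\<^sup>+x. f x \<partial>K) = (\<integral>\<^sup>+x. g x \<partial>K)" if "sets K = sets M" for K
      using cong(3) sets_eq_imp_space_eq[OF that] by (intro nn_integral_cong) simp
    then show ?case using cong(4) sets_N by simp
  next
    case (set A)
    then show ?case using sets_N by (simp add: emeasure_mix_measure)
  next
    case (mult u c)
    then show ?case using measurable_N[OF mult(2)]
      by (simp add: nn_integral_cmult distrib_left mult.left_commute)
  next
    case (add u v)
    then show ?case using measurable_N[OF add(1)] measurable_N[OF add(4)]
      by (simp add: nn_integral_add distrib_left ac_simps)
  next
    case (seq U)
    have SUP_integral: "(\<integral>\<^sup>+x. (SUP i. U i) x \<partial>K) = (SUP i. \<integral>\<^sup>+x. U i x \<partial>K)"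
      if "\<And>i. U i \<in> borel_measurable K" for K
      unfolding SUP_apply by (rule nn_integral_monotone_convergence_SUP[OF seq(4) that])
    have mono: "incseq (\<lambda>i. c * (\<integral>\<^sup>+x. U i x \<partial>K))" for c K
      using seq(4) by (auto simp: incseq_def le_fun_def intro!: mult_left_mono nn_integral_mono)
    have U_N: "\<And>i. U i \<in> borel_measurable N"
      using measurable_N[OF seq(1)] .
    have U_mix: "\<And>i. U i \<in> borel_measurable (mix_measure \<alpha> M N)"
      using seq(1) by simp
    have "(\<integral>\<^sup>+x. (SUP i. U i) x \<partial>mix_measure \<alpha> M N)
        = (SUP i. ennreal \<alpha> * (\<integral>\<^sup>+x. U i x \<partial>M) + ennreal (1 - \<alpha>) * (\<integral>\<^sup>+x. U i x \<partial>N))"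
      by (simp only: SUP_integral[OF U_mix] seq(3))
    also have "\<dots> = (SUP i. ennreal \<alpha> * (\<integral>\<^sup>+x. U i x \<partial>M)) + (SUP i. ennreal (1 - \<alpha>) * (\<integral>\<^sup>+x. U i x \<partial>N))"
      by (rule ennreal_SUP_add[OF mono mono])
    also have "\<dots> = ennreal \<alpha> * (\<integral>\<^sup>+x. (SUP i. U i) x \<partial>M) + ennreal (1 - \<alpha>) * (\<integral>\<^sup>+x. (SUP i. U i) x \<partial>N)"
      by (simp only: SUP_mult_left_ennreal SUP_integral[OF seq(1)] SUP_integral[OF U_N])
    finally show ?case .
  qed
qed

lemma integral_mix_measure:
  fixes f :: "'a \<Rightarrow> real"
  assumes sets_N: "sets N = sets M" and f_M: "integrable M f" and f_N: "integrable N f"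
    and "0 \<le> \<alpha>" "\<alpha> \<le> 1"
  shows "integral\<^sup>L (mix_measure \<alpha> M N) f = \<alpha> * integral\<^sup>L M f + (1 - \<alpha>) * integral\<^sup>L N f"
proof -
  have enn2real_mix: "enn2real (ennreal \<alpha> * a + ennreal (1 - \<alpha>) * b) = \<alpha> * enn2real a + (1 - \<alpha>) * enn2real b"
    if "a \<noteq> \<infinity>" "b \<noteq> \<infinity>" for a b :: ennreal
    using that \<open>0 \<le> \<alpha>\<close> \<open>\<alpha> \<le> 1\<close>
    by (simp add: enn2real_plus enn2real_mult ennreal_mult_less_top less_top)
  have f_meas: "(\<lambda>x. ennreal (f x)) \<in> borel_measurable M" "(\<lambda>x. ennreal (- f x)) \<in> borel_measurable M"
    using f_M by auto
  have finite: "(\<integral>\<^sup>+x. ennreal (f x) \<partial>M) \<noteq> \<infinity>" "(\<integral>\<^sup>+x. ennreal (- f x) \<partial>M) \<noteq> \<infinity>"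
      "(\<integral>\<^sup>+x. ennreal (f x) \<partial>N) \<noteq> \<infinity>" "(\<integral>\<^sup>+x. ennreal (- f x) \<partial>N) \<noteq> \<infinity>"
    using f_M f_N unfolding real_integrable_def by auto
  note pos = nn_integral_mix_measure[OF sets_N f_meas(1), of \<alpha>]
    and neg = nn_integral_mix_measure[OF sets_N f_meas(2), of \<alpha>]
  have f_mix: "integrable (mix_measure \<alpha> M N) f"
    using f_M finite unfolding real_integrable_def by (simp add: pos neg ennreal_mult_eq_top_iff)
  show ?thesis
    unfolding real_lebesgue_integral_def[OF f_mix] real_lebesgue_integral_def[OF f_M]
      real_lebesgue_integral_def[OF f_N] pos neg enn2real_mix[OF finite(1,3)] enn2real_mix[OF finite(2,4)]
    by (simp add: algebra_simps)
qed

lemma has_derivative_imp_difference_quotient_tendsto: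
  fixes F :: "'a::real_normed_vector \<Rightarrow> real"
  assumes "(F has_derivative F') (at x)"
  shows "((\<lambda>t. (F (x + t *\<^sub>R h) - F x) / t) \<longlongrightarrow> F' h) (at 0)"
proof -
  have "((\<lambda>t. x + t *\<^sub>R h) has_derivative (\<lambda>t. t *\<^sub>R h)) (at 0)"
    by (auto intro!: derivative_eq_intros)
  from diff_chain_at[OF this, of F F'] assms
  have "((\<lambda>t. F (x + t *\<^sub>R h)) has_derivative (\<lambda>t. F' (t *\<^sub>R h))) (at 0)"
    by (simp add: comp_def)
  then have "((\<lambda>t. F (x + t *\<^sub>R h)) has_field_derivative F' h) (at 0)"
    by (rule has_derivative_imp_has_field_derivative)
      (simp add: linear_scale[OF has_derivative_linear[OF assms]])
  then show ?thesis
    by (simp add: has_field_derivative_iff)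
qed

lemma has_derivative_first_order_bound:
  fixes F :: "'a::real_normed_vector \<Rightarrow> real"
  assumes F': "(F has_derivative F') (at x)"
    and chord_gap: "\<And>t. 0 < t \<Longrightarrow> t < 1 \<Longrightarrow>
      F (t *\<^sub>R y + (1 - t) *\<^sub>R x) \<le> t * F y + (1 - t) * F x - t * (1 - t) * c"
  shows "F x + F' (y - x) + c \<le> F y"
proof -
  have quotient_bound: "(F (x + t *\<^sub>R (y - x)) - F x) / t \<le> F y - F x - (1 - t) * c"
    if t: "0 < t" "t < 1" for t
  proof -
    have "t *\<^sub>R y + (1 - t) *\<^sub>R x = x + t *\<^sub>R (y - x)"
      by (simp add: algebra_simps)
    with chord_gap[OF t] have "F (x + t *\<^sub>R (y - x)) - F x \<le> t * (F y - F x - (1 - t) * c)"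
      by (simp add: algebra_simps)
    with t show ?thesis
      by (simp add: divide_le_eq mult.commute)
  qed
  have "((\<lambda>t. F y - F x - (1 - t) * c) \<longlongrightarrow> F y - F x - c) (at_right 0)"
    by (auto intro!: tendsto_eq_intros)
  moreover have "((\<lambda>t. (F (x + t *\<^sub>R (y - x)) - F x) / t) \<longlongrightarrow> F' (y - x)) (at_right 0)"
    using has_derivative_imp_difference_quotient_tendsto[OF F'] by (rule tendsto_mono[OF at_le, rotated]) simp
  moreover have "\<forall>\<^sub>F t in at_right 0. (F (x + t *\<^sub>R (y - x)) - F x) / t \<le> F y - F x - (1 - t) * c"
    unfolding eventually_at_right_field using quotient_bound by (intro exI[of _ 1]) simp
  ultimately have "F' (y - x) \<le> F y - F x - c"
    by (rule tendsto_le[OF trivial_limit_at_right_real])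
  then show ?thesis
    by simp
qed

lemma norm_matrix_affine_diff_commute:
  fixes A :: "'a::real_vector \<Rightarrow> real^'n^'m" and b :: "'a \<Rightarrow> real^'m"
  assumes "linear A" "linear b"
  shows "norm (A (u - v) *v z + b (u - v)) = norm (A (v - u) *v z + b (v - u))"
proof -
  have "A (u - v) *v z + b (u - v) = - (A (v - u) *v z + b (v - u))"
    by (simp add: linear_diff[OF assms(1)] linear_diff[OF assms(2)] matrix_vector_mult_diff_rdistrib)
  then show ?thesis
    by (simp only: norm_minus_cancel)
qed

theorem lemmaC1:
  fixes D0 :: "(real^'m::finite) measure"
    and S0 :: "real^'m^'m" and mu0 :: "real^'m"
    and SS :: "real^'d::finite \<Rightarrow> real^'m^'m" and mu :: "real^'d \<Rightarrow> real^'m"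
    and \<Theta> :: "(real^'d) set" and g :: "real^'m \<Rightarrow> real" and \<gamma> :: real
  assumes D0_prob: "prob_space D0" and D0_sets: "sets D0 = sets borel"
    and D0_second: "integrable D0 (\<lambda>z. norm z ^ 2)"
    and D0_mean: "integral\<^sup>L D0 (\<lambda>z. z) = 0"
    and lin_Sigma: "linear SS" and lin_mu: "linear mu"
    and conv: "convex \<Theta>"
    and g_int: "\<And>\<theta>. integrable (ls_dist D0 S0 SS mu0 mu \<theta>) g"
    and \<gamma>_nonneg: "\<gamma> \<ge> 0"
    and hyp: "\<And>\<theta> \<theta>' \<alpha>. \<theta> \<in> \<Theta> \<Longrightarrow> \<theta>' \<in> \<Theta> \<Longrightarrow> 0 < \<alpha> \<Longrightarrow> \<alpha> < 1 \<Longrightarrow>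
        integral\<^sup>L (ls_dist D0 S0 SS mu0 mu (\<alpha> *\<^sub>R \<theta> + (1 - \<alpha>) *\<^sub>R \<theta>')) g
          \<le> integral\<^sup>L (mix_measure \<alpha> (ls_dist D0 S0 SS mu0 mu \<theta>) (ls_dist D0 S0 SS mu0 mu \<theta>')) g
            - \<alpha> * (1 - \<alpha>) * \<gamma> / 2 *
              integral\<^sup>L D0 (\<lambda>z0. (norm (SS (\<theta> - \<theta>') *v z0 + mu (\<theta> - \<theta>'))) ^ 2)"
    and \<theta>_in: "\<theta> \<in> \<Theta>" and \<theta>'_in: "\<theta>' \<in> \<Theta>"
    and diff: "(\<lambda>t. integral\<^sup>L (ls_dist D0 S0 SS mu0 mu t) g) differentiable (at \<theta>)"
  shows "integral\<^sup>L (ls_dist D0 S0 SS mu0 mu \<theta>') g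
     \<ge> integral\<^sup>L (ls_dist D0 S0 SS mu0 mu \<theta>) g
       + frechet_derivative (\<lambda>t. integral\<^sup>L (ls_dist D0 S0 SS mu0 mu t) g) (at \<theta>) (\<theta>' - \<theta>)
       + \<gamma> / 2 * integral\<^sup>L D0 (\<lambda>z0. (norm (SS (\<theta> - \<theta>') *v z0 + mu (\<theta> - \<theta>'))) ^ 2)"
proof -
  define F where "F = (\<lambda>t. integral\<^sup>L (ls_dist D0 S0 SS mu0 mu t) g)"
  define Q where "Q = integral\<^sup>L D0 (\<lambda>z0. (norm (SS (\<theta> - \<theta>') *v z0 + mu (\<theta> - \<theta>'))) ^ 2)"
  have Q_swap: "integral\<^sup>L D0 (\<lambda>z0. (norm (SS (\<theta>' - \<theta>) *v z0 + mu (\<theta>' - \<theta>))) ^ 2) = Q"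
    unfolding Q_def using norm_matrix_affine_diff_commute[OF lin_Sigma lin_mu] by simp
  have mixture: "integral\<^sup>L (mix_measure t (ls_dist D0 S0 SS mu0 mu \<theta>') (ls_dist D0 S0 SS mu0 mu \<theta>)) g
      = t * F \<theta>' + (1 - t) * F \<theta>" if "0 < t" "t < 1" for t
    unfolding F_def using that by (intro integral_mix_measure g_int) (simp_all add: ls_dist_def)
  have F': "(F has_derivative frechet_derivative F (at \<theta>)) (at \<theta>)"
    using diff unfolding F_def frechet_derivative_works .
  have chord_gap: "F (t *\<^sub>R \<theta>' + (1 - t) *\<^sub>R \<theta>) \<le> t * F \<theta>' + (1 - t) * F \<theta> - t * (1 - t) * (\<gamma> / 2 * Q)"
    if "0 < t" "t < 1" for t
  proof -
    have "F (t *\<^sub>R \<theta>' + (1 - t) *\<^sub>R \<theta>) \<le> t * F \<theta>' + (1 - t) * F \<theta> - t * (1 - t) * \<gamma> / 2 * Q"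
      using hyp[OF \<theta>'_in \<theta>_in that] unfolding mixture[OF that] Q_swap unfolding F_def .
    then show ?thesis
      by (simp add: algebra_simps)
  qed
  from has_derivative_first_order_bound[OF F' chord_gap] show ?thesis
    by (simp add: F_def Q_def)
qed

end
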